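(* For a non-negative integer $n$ let $a_n\langle n!\rangle=\sum_{k=0}^{\infty}k^n\,2^{-k}$ (with $0^0=1$); these are integers $2,2,6,26,150,1082,\dots$. For every natural number $n$ such that $n+1$ is prime, \[ a_n\langle n!\rangle\equiv 0 \pmod{n+1}. \] *)

theory Defs
  imports Complex_Main "HOL-Computational_Algebra.Primes"
begin

definition a_seq :: "nat \<Rightarrow> real" where
  "a_seq n = (\<Sum>k. real k ^ n / 2 ^ k)"

end

theory Submission
  imports Defs "HOL-Combinatorics.Stirling" "HOL-Number_Theory.Number_Theory"
    "HOL-Real_Asymp.Real_Asymp"
begin

text \<open>Expanding \<open>k ^ n\<close> in the basis \<open>k choose m\<close> gives \<open>k ^ n = \<Sum>m. (k choose m) * m! * S(n, m)\<close>
  with \<open>S\<close> the Stirling numbers of the second kind, and \<open>\<Sum>k. (k choose m) / 2 ^ k = 2\<close> for every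
  \<open>m\<close>; hence \<open>a_n\<close> is twice the ordered Bell number \<open>\<Sum>m\<le>n. m! * S(n, m)\<close>.
  For a prime \<open>p = n + 1\<close>, the same expansion read modulo \<open>p\<close> is a unitriangular system whose
  right-hand side is \<open>k ^ (p - 1) \<equiv> 1\<close> (Fermat) for \<open>0 < k < p\<close>; its solution is
  \<open>m! * S(p - 1, m) \<equiv> (-1) ^ (m + 1)\<close> for \<open>1 \<le> m \<le> p - 1\<close>, and these signs cancel in pairs
  when \<open>p\<close> is odd; for \<open>p = 2\<close> the factor \<open>2\<close> suffices.\<close>

definition ordered_Bell :: "nat \<Rightarrow> nat" where
  "ordered_Bell n = (\<Sum>m\<le>n. fact m * Stirling n m)"

lemma mult_choose_eq: "k * (k choose m) = Suc m * (k choose Suc m) + m * (k choose m)"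
proof -
  have split: "k * (k choose m) = (k - m) * (k choose m) + m * (k choose m)"
    by (cases "m \<le> k") (auto simp: algebra_simps)
  have "(k - m) * (k choose m) = k * ((k - 1) choose m)"
    by (rule binomial_absorb_comp)
  also have "\<dots> = Suc m * (k choose Suc m)"
    by (rule binomial_absorption [symmetric])
  finally show ?thesis
    using split by simp
qed

lemma power_eq_sum_choose_Stirling: "k ^ n = (\<Sum>m\<le>n. (k choose m) * (fact m * Stirling n m))"
proof (induction n)
  case 0
  show ?case by simp
next
  case (Suc n)
  define F where "F m = fact m * Stirling n m" for m :: nat
  have F_high: "F (Suc n) = 0"
    by (simp add: F_def)
  have "k ^ Suc n = (\<Sum>m\<le>n. F m * (k * (k choose m)))"
    using Suc by (simp add: F_def sum_distrib_left algebra_simps)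
  also have "\<dots> = (\<Sum>m\<le>n. Suc m * F m * (k choose Suc m)) + (\<Sum>m\<le>Suc n. m * F m * (k choose m))"
    by (simp add: mult_choose_eq sum.distrib algebra_simps F_high)
  also have "(\<Sum>m\<le>Suc n. m * F m * (k choose m)) = (\<Sum>m\<le>n. Suc m * F (Suc m) * (k choose Suc m))"
    by (subst sum.atMost_Suc_shift) simp
  also have "(\<Sum>m\<le>n. Suc m * F m * (k choose Suc m)) + \<dots>
      = (\<Sum>m\<le>n. (k choose Suc m) * (fact (Suc m) * Stirling (Suc n) (Suc m)))"
    by (simp add: F_def sum.distrib [symmetric] algebra_simps)
  also have "\<dots> = (\<Sum>m\<le>Suc n. (k choose m) * (fact m * Stirling (Suc n) m))"
    by (subst sum.atMost_Suc_shift) simp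
  finally show ?case .
qed

lemma summable_power_div_power2: "summable (\<lambda>k. real k ^ n / 2 ^ k)"
proof (rule summable_comparison_test_bigo)
  show "summable (\<lambda>k. norm (1 / (4/3 :: real) ^ k))"
    by (simp add: summable_geometric flip: power_one_over)
  show "(\<lambda>k. real k ^ n / 2 ^ k) \<in> O(\<lambda>k. 1 / (4/3) ^ k)"
    by real_asymp
qed

lemma summable_choose_div_power2: "summable (\<lambda>k. real (k choose m) / 2 ^ k)"
proof (rule summable_comparison_test [OF _ summable_power_div_power2])
  have "k choose m \<le> k ^ m" for k
    using binomial_le_pow [of m k] by (cases "m \<le> k") (auto simp: binomial_eq_0)
  then have "real (k choose m) \<le> real k ^ m" for k
    by (metis of_nat_le_iff of_nat_power)
  then show "\<exists>N. \<forall>k\<ge>N. norm (real (k choose m) / 2 ^ k) \<le> real k ^ m / 2 ^ k"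
    by (simp add: divide_right_mono)
qed

lemma suminf_choose_div_power2: "(\<Sum>k. real (k choose m) / 2 ^ k) = 2"
proof (induction m)
  case 0
  show ?case by (simp add: suminf_geometric flip: power_one_over)
next
  case (Suc m)
  let ?f = "\<lambda>k. real (k choose Suc m) / 2 ^ k"
  let ?g = "\<lambda>k. real (k choose m) / 2 ^ k"
  have "suminf ?f = (\<Sum>k. ?f (Suc k))"
    using suminf_split_head [OF summable_choose_div_power2 [of "Suc m"]] by simp
  also have "\<dots> = (\<Sum>k. (?g k + ?f k) / 2)"
    by (simp add: field_simps)
  also have "\<dots> = (suminf ?g + suminf ?f) / 2"
    using summable_choose_div_power2 [of m] summable_choose_div_power2 [of "Suc m"]
    by (simp add: suminf_divide suminf_add summable_add summable_divide)
  finally show ?case using Suc by simp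
qed

lemma a_seq_eq_ordered_Bell: "a_seq n = 2 * real (ordered_Bell n)"
proof -
  define c where "c m = real (fact m * Stirling n m)" for m
  have expand: "real k ^ n / 2 ^ k = (\<Sum>m\<le>n. c m * (real (k choose m) / 2 ^ k))" for k
    unfolding c_def of_nat_power [symmetric] power_eq_sum_choose_Stirling [of k n]
    by (simp add: sum_divide_distrib mult.commute)
  have "a_seq n = (\<Sum>m\<le>n. \<Sum>k. c m * (real (k choose m) / 2 ^ k))"
    unfolding a_seq_def expand
    by (rule suminf_sum) (intro summable_mult summable_choose_div_power2)
  also have "\<dots> = (\<Sum>m\<le>n. c m * 2)"
    by (simp only: suminf_mult [OF summable_choose_div_power2] suminf_choose_div_power2)
  finally show ?thesis
    by (simp add: ordered_Bell_def c_def sum_distrib_left mult.commute)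
qed

lemma dvd_binomial_transform_imp_dvd:
  fixes D :: "nat \<Rightarrow> 'a::comm_ring_1"
  assumes transform: "\<And>k. k \<le> N \<Longrightarrow> d dvd (\<Sum>m\<le>k. of_nat (k choose m) * D m)"
  shows "k \<le> N \<Longrightarrow> d dvd D k"
proof (induction k rule: less_induct)
  case (less k)
  have "(\<Sum>m\<le>k. of_nat (k choose m) * D m) = D k + (\<Sum>m<k. of_nat (k choose m) * D m)"
    by (simp add: lessThan_Suc_atMost [symmetric])
  moreover have "d dvd (\<Sum>m<k. of_nat (k choose m) * D m)"
    using less by (intro dvd_sum dvd_mult) auto
  ultimately show ?case
    using transform [OF less.prems] by (simp add: dvd_add_left_iff)
qed

lemma sum_choose_mult_sign:
  "(\<Sum>m\<le>k. of_nat (k choose m) * (of_bool (m = 0) - (-1) ^ m)) = (of_bool (0 < k) :: 'a::comm_ring_1)"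
proof (cases "k = 0")
  case False
  have "(\<Sum>m\<le>k. of_nat (k choose m) * (-1) ^ m) = (0 :: 'a)"
    using choose_alternating_sum [of k] False by (simp add: mult.commute)
  with False show ?thesis
    by (simp add: right_diff_distrib sum_subtractf)
qed simp

lemma power_prime_minus_one_cong:
  assumes "prime p" "k < p"
  shows "[int k ^ (p - 1) = of_bool (0 < k)] (mod int p)"
proof (cases "k = 0")
  case True
  then show ?thesis
    using prime_gt_1_nat [OF \<open>prime p\<close>] by (simp add: power_0_left)
next
  case False
  then have "\<not> p dvd k"
    using \<open>k < p\<close> by (simp add: nat_dvd_not_less)
  then have "[int (k ^ (p - 1)) = int 1] (mod int p)"
    unfolding cong_int_iff by (rule fermat_theorem [OF \<open>prime p\<close>])
  with False show ?thesis
    by simp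
qed

lemma fact_Stirling_prime_cong:
  assumes "prime p" "m < p"
  shows "[int (fact m * Stirling (p - 1) m) = of_bool (m = 0) - (-1) ^ m] (mod int p)"
proof -
  define F where "F m = fact m * Stirling (p - 1) m" for m
  define D where "D m = int (F m) - (of_bool (m = 0) - (-1) ^ m)" for m
  have "int p dvd (\<Sum>m\<le>k. of_nat (k choose m) * D m)" if "k \<le> p - 1" for k
  proof -
    have "k ^ (p - 1) = (\<Sum>m\<le>k. (k choose m) * F m)"
      unfolding power_eq_sum_choose_Stirling F_def
      by (rule sum.mono_neutral_right) (use that in \<open>auto simp: binomial_eq_0\<close>)
    then have pow: "int k ^ (p - 1) = (\<Sum>m\<le>k. of_nat (k choose m) * int (F m))"
      by (simp only: of_nat_power [symmetric] of_nat_sum of_nat_mult)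
    have "(\<Sum>m\<le>k. of_nat (k choose m) * D m) = (\<Sum>m\<le>k. of_nat (k choose m) * int (F m))
        - (\<Sum>m\<le>k. of_nat (k choose m) * (of_bool (m = 0) - (-1) ^ m))"
      unfolding D_def sum_subtractf [symmetric] by (simp only: right_diff_distrib)
    also have "\<dots> = int k ^ (p - 1) - of_bool (0 < k)"
      by (simp only: pow sum_choose_mult_sign)
    finally have "(\<Sum>m\<le>k. of_nat (k choose m) * D m) = int k ^ (p - 1) - of_bool (0 < k)" .
    moreover have "[int k ^ (p - 1) = of_bool (0 < k)] (mod int p)"
      using that prime_gt_1_nat [OF \<open>prime p\<close>]
      by (intro power_prime_minus_one_cong [OF \<open>prime p\<close>]) linarith
    ultimately show ?thesis by (simp add: cong_iff_dvd_diff)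
  qed
  moreover have "m \<le> p - 1"
    using \<open>m < p\<close> by simp
  ultimately have "int p dvd D m"
    by (rule dvd_binomial_transform_imp_dvd)
  then show ?thesis by (simp add: D_def F_def cong_iff_dvd_diff)
qed

lemma sum_neg_one_power_atMost_even: "(\<Sum>m\<le>2 * j. (-1 :: 'a::comm_ring_1) ^ m) = 1"
  by (induction j) (simp_all add: sum.atMost_Suc)

lemma prime_dvd_ordered_Bell:
  assumes "prime p" "odd p"
  shows "p dvd ordered_Bell (p - 1)"
proof -
  obtain j where j: "p - 1 = 2 * j"
    using \<open>odd p\<close> by (auto elim!: oddE)
  have "[int (ordered_Bell (p - 1)) = (\<Sum>m\<le>p - 1. of_bool (m = 0) - (-1) ^ m)] (mod int p)"
    unfolding ordered_Bell_def of_nat_sum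
    by (rule cong_sum) (use fact_Stirling_prime_cong [OF \<open>prime p\<close>] prime_gt_1_nat [OF \<open>prime p\<close>] in auto)
  also have "(\<Sum>m\<le>p - 1. of_bool (m = 0) - (-1) ^ m) = (0 :: int)"
    unfolding j sum_subtractf sum_neg_one_power_atMost_even by simp
  finally show ?thesis
    by (simp add: cong_0_iff)
qed

lemma prime_dvd_two_ordered_Bell:
  assumes "prime p"
  shows "p dvd 2 * ordered_Bell (p - 1)"
proof (cases "p = 2")
  case False
  then have "odd p"
    using prime_odd_nat [OF assms] prime_ge_2_nat [OF assms] by simp
  then show ?thesis using prime_dvd_ordered_Bell [OF assms] by simp
qed simp

theorem mainTheorem4:
  fixes n :: nat
  assumes "prime (n + 1)"
  shows "\<exists>m::int. a_seq n = real (n + 1) * of_int m"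
proof -
  obtain q where "2 * ordered_Bell n = (n + 1) * q"
    using prime_dvd_two_ordered_Bell [OF assms] by auto
  then have "a_seq n = real (n + 1) * of_int (int q)"
    unfolding a_seq_eq_ordered_Bell by (metis of_nat_mult of_nat_numeral of_int_of_nat_eq)
  then show ?thesis ..
qed

end
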